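(* Let $k\ge2$ and $G=BS(1,k)\cong\mathbb{Z}[1/k]\rtimes\mathbb{Z}$. Every conjugacy geodesic $w$ for a conjugacy class $[(x,m)]$ with $m>0$ is, up to a cyclic permutation, of the form $a^{x_0}ta^{x_1}t\cdots a^{x_{m-1}}t$ for some $x_0,\ldots,x_{m-1}\in\mathbb{Z}$.
   Context: $BS(1,k)=\langle a,t\mid tat^{-1}=a^k\rangle$ is identified with $\mathbb{Z}[1/k]\rtimes\mathbb{Z}$ via $a\mapsto(1,0)$, $t\mapsto(0,1)$, the generator of $\mathbb{Z}$ acting by multiplication by $k$; elements are pairs $(x,m)$. $a^x$ denotes $|x|$ copies of $a$ or $a^{-1}$ according to the sign of $x$. Word length is with respect to $\{a,t\}$. A word $w$ is a conjugacy geodesic for the class $[g]$ if it is a geodesic word representing an element of $[g]$ of minimal length among all elements of $[g]$. *)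

theory Defs
  imports Main "HOL.Rat"
begin

text \<open>BS(1,k) realised as Z[1/k] \<rtimes> Z, with Z[1/k] viewed inside the rationals.
  Elements are pairs (x,m); the product is (x,m)(y,n) = (x + k^m y, m + n).
  The generator a is (1,0) and t is (0,1).\<close>

definition bs_mul :: "int \<Rightarrow> rat \<times> int \<Rightarrow> rat \<times> int \<Rightarrow> rat \<times> int" where
  "bs_mul k g h = (fst g + (of_int k) powi (snd g) * fst h, snd g + snd h)"

definition bs_inv :: "int \<Rightarrow> rat \<times> int \<Rightarrow> rat \<times> int" where
  "bs_inv k g = (- ((of_int k) powi (- snd g)) * fst g, - snd g)"

datatype letter = A | Ainv | T | Tinv

fun letter_val :: "int \<Rightarrow> letter \<Rightarrow> rat \<times> int" where
  "letter_val k A = (1, 0)"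
| "letter_val k Ainv = (-1, 0)"
| "letter_val k T = (0, 1)"
| "letter_val k Tinv = (0, -1)"

fun evalw :: "int \<Rightarrow> letter list \<Rightarrow> rat \<times> int" where
  "evalw k [] = (0, 0)"
| "evalw k (l # w) = bs_mul k (letter_val k l) (evalw k w)"

definition BS :: "int \<Rightarrow> (rat \<times> int) set" where
  "BS k = range (evalw k)"

definition wordlen :: "int \<Rightarrow> rat \<times> int \<Rightarrow> nat" where
  "wordlen k g = (LEAST n. \<exists>w. length w = n \<and> evalw k w = g)"

definition geodesic :: "int \<Rightarrow> letter list \<Rightarrow> bool" where
  "geodesic k w \<longleftrightarrow> length w = wordlen k (evalw k w)"

definition conj_class :: "int \<Rightarrow> rat \<times> int \<Rightarrow> (rat \<times> int) set" where
  "conj_class k g = {bs_mul k (bs_mul k h g) (bs_inv k h) | h. h \<in> BS k}"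

definition conj_geodesic :: "int \<Rightarrow> letter list \<Rightarrow> rat \<times> int \<Rightarrow> bool" where
  "conj_geodesic k w g \<longleftrightarrow> geodesic k w \<and> evalw k w \<in> conj_class k g
     \<and> (\<forall>h \<in> conj_class k g. length w \<le> wordlen k h)"

definition apow :: "int \<Rightarrow> letter list" where
  "apow x = replicate (nat \<bar>x\<bar>) (if x \<ge> 0 then A else Ainv)"

end

theory Submission
  imports Defs
begin

(* Conjugating (x, m) by (z, 0) with z in Z[1/k] shifts x by (1 - k^m) z, so the conjugacy
   class of (x, m) is closed under shifts by the ideal (1 - k^m) Z[1/k].  Modulo this ideal
   k^m = 1, so an a-letter at height h of a word of t-exponent sum m > 0 may be moved to
   height h mod m.  Collecting the a-letters by height mod m turns any such word into a
   conjugate word a^c0 t a^c1 t ... a^c(m-1) t that is no longer, and strictly shorter if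
   t^-1 occurs; hence a conjugacy geodesic has no t^-1 and exactly m letters t.  Moving its
   final a-block cyclically to the front and replacing each a-block by the power of a it
   represents gives another conjugate word of this form, so minimality forces every a-block
   to be a power of a already. *)

lemma bs_mul_assoc:
  assumes "k \<noteq> 0"
  shows "bs_mul k g (bs_mul k h l) = bs_mul k (bs_mul k g h) l"
  using assms by (simp add: bs_mul_def power_int_add algebra_simps)

lemma evalw_append:
  assumes "k \<noteq> 0"
  shows "evalw k (u @ v) = bs_mul k (evalw k u) (evalw k v)"
  by (induction u) (simp_all add: bs_mul_assoc[OF assms], simp add: bs_mul_def)

lemma BS_mul:
  assumes "k \<noteq> 0" "g \<in> BS k" "h \<in> BS k"
  shows "bs_mul k g h \<in> BS k"
proof -
  obtain u v where "g = evalw k u" "h = evalw k v"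
    using assms(2,3) unfolding BS_def by blast
  then have "bs_mul k g h = evalw k (u @ v)"
    by (simp add: evalw_append[OF assms(1)])
  then show ?thesis
    unfolding BS_def by simp
qed

lemma bs_conj:
  assumes "k \<noteq> 0"
  shows "bs_mul k (bs_mul k (a, j) (x, m)) (bs_inv k (a, j))
         = (a + of_int k powi j * x - of_int k powi m * a, m)"
  using assms by (simp add: bs_mul_def bs_inv_def power_int_add power_int_minus field_simps)

lemma evalw_replicate_T: "evalw k (replicate e T) = (0, int e)"
  by (induction e) (auto simp: bs_mul_def)

lemma evalw_replicate_Tinv: "evalw k (replicate e Tinv) = (0, - int e)"
  by (induction e) (auto simp: bs_mul_def)

lemma snd_evalw: "snd (evalw k w) = int (count_list w T) - int (count_list w Tinv)"
proof (induction w)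
  case (Cons l w)
  then show ?case by (cases l) (auto simp: bs_mul_def)
qed simp

lemma length_eq_count_letters:
  "length w = count_list w A + count_list w Ainv + count_list w T + count_list w Tinv"
proof -
  have "set w \<subseteq> {A, Ainv, T, Tinv}"
    by (auto intro: letter.exhaust)
  then show ?thesis
    using sum_count_set[of w "{A, Ainv, T, Tinv}"] by simp
qed

definition a_exp :: "letter list \<Rightarrow> int" where
  "a_exp s = int (count_list s A) - int (count_list s Ainv)"

lemma a_exp_append: "a_exp (s @ s') = a_exp s + a_exp s'"
  by (simp add: a_exp_def)

lemma evalw_a_word:
  assumes "set s \<subseteq> {A, Ainv}"
  shows "evalw k s = (of_int (a_exp s), 0)"
  using assms by (induction s) (auto simp: a_exp_def bs_mul_def)

lemma set_apow: "set (apow y) \<subseteq> {A, Ainv}"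
  by (simp add: apow_def set_replicate_conv_if)

lemma length_apow: "length (apow y) = nat \<bar>y\<bar>"
  by (simp add: apow_def)

lemma count_list_replicate_same: "count_list (replicate n x) x = n"
  by (induction n) auto

lemma a_exp_apow: "a_exp (apow y) = y"
  by (simp add: apow_def a_exp_def count_list_replicate_same)

lemma evalw_apow: "evalw k (apow y) = (of_int y, 0)"
  using evalw_a_word[OF set_apow] by (simp add: a_exp_apow)

lemma length_a_word:
  assumes "set s \<subseteq> {A, Ainv}"
  shows "length s = count_list s A + count_list s Ainv"
  using sum_count_set[OF assms] by simp

lemma abs_a_exp_le_length:
  assumes "set s \<subseteq> {A, Ainv}"
  shows "nat \<bar>a_exp s\<bar> \<le> length s"
  using length_a_word[OF assms] by (simp add: a_exp_def)

lemma a_word_eq_apow: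
  assumes s: "set s \<subseteq> {A, Ainv}" and len: "nat \<bar>a_exp s\<bar> = length s"
  shows "s = apow (a_exp s)"
proof -
  have "count_list s Ainv = 0 \<or> count_list s A = 0"
    using len length_a_word[OF s] by (simp add: a_exp_def) linarith
  then consider "set s \<subseteq> {A}" | "set s \<subseteq> {Ainv}"
    using s by (auto simp: count_list_0_iff)
  then show ?thesis
  proof cases
    case 1
    then have "Ainv \<notin> set s" and "s = replicate (length s) A"
      by (auto simp: replicate_length_same subset_iff)
    then show ?thesis
      using length_a_word[OF s] by (simp add: a_exp_def apow_def)
  next
    case 2
    then have "A \<notin> set s" and "s = replicate (length s) Ainv"
      by (auto simp: replicate_length_same subset_iff)
    then show ?thesis
      using length_a_word[OF s] by (cases "length s = 0") (simp_all add: a_exp_def apow_def)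
  qed
qed

definition Zinv :: "int \<Rightarrow> rat set" where
  "Zinv k = {of_int n / of_int k ^ e | n e. True}"

lemma of_int_in_Zinv: "of_int n \<in> Zinv k"
  unfolding Zinv_def by (rule CollectI, rule exI[of _ n], rule exI[of _ 0]) simp

lemma Zinv_add:
  assumes "k \<noteq> 0" "a \<in> Zinv k" "b \<in> Zinv k"
  shows "a + b \<in> Zinv k"
proof -
  obtain n e n' e' where a: "a = of_int n / of_int k ^ e" and b: "b = of_int n' / of_int k ^ e'"
    using assms(2,3) unfolding Zinv_def by blast
  have "a + b = of_int (n * k ^ e' + n' * k ^ e) / of_int k ^ (e + e')"
    using assms(1) by (simp add: a b field_simps power_add)
  then show ?thesis
    unfolding Zinv_def by blast
qed

lemma Zinv_mult:
  assumes "a \<in> Zinv k" "b \<in> Zinv k"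
  shows "a * b \<in> Zinv k"
proof -
  obtain n e n' e' where "a = of_int n / of_int k ^ e" "b = of_int n' / of_int k ^ e'"
    using assms unfolding Zinv_def by blast
  then have "a * b = of_int (n * n') / of_int k ^ (e + e')"
    by (simp add: power_add)
  then show ?thesis
    unfolding Zinv_def by blast
qed

lemma Zinv_uminus: "a \<in> Zinv k \<Longrightarrow> - a \<in> Zinv k"
  using Zinv_mult[OF of_int_in_Zinv[of "-1"]] by simp

lemma power_int_in_Zinv: "of_int k powi e \<in> Zinv k"
proof (cases "e \<ge> 0")
  case True
  then have "(of_int k :: rat) powi e = of_int (k ^ nat e)"
    by (simp add: power_int_def)
  then show ?thesis
    by (metis of_int_in_Zinv)
next
  case False
  then obtain n where "e = - int n"
    by (intro that[of "nat (- e)"]) simp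
  then have "(of_int k :: rat) powi e = of_int 1 / of_int k ^ n"
    by (simp add: power_int_minus_divide)
  then show ?thesis
    unfolding Zinv_def by blast
qed

lemma Zinv_in_BS:
  assumes "k \<noteq> 0" "z \<in> Zinv k"
  shows "(z, 0) \<in> BS k"
proof -
  obtain n e where z: "z = of_int n / of_int k ^ e"
    using assms(2) unfolding Zinv_def by blast
  have "evalw k (replicate e Tinv @ apow n @ replicate e T) = (z, 0)"
    using assms(1)
    by (simp add: evalw_append evalw_apow evalw_replicate_T evalw_replicate_Tinv
        bs_mul_def z power_int_minus divide_inverse)
  then show ?thesis
    unfolding BS_def by (metis rangeI)
qed

definition cong_Zinv :: "int \<Rightarrow> rat \<Rightarrow> rat \<Rightarrow> rat \<Rightarrow> bool" where
  "cong_Zinv k d a b \<longleftrightarrow> (\<exists>z \<in> Zinv k. a - b = d * z)"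

lemma cong_Zinv_refl: "cong_Zinv k d a a"
  unfolding cong_Zinv_def using of_int_in_Zinv[of 0] by force

lemma cong_Zinv_sym: "cong_Zinv k d a b \<Longrightarrow> cong_Zinv k d b a"
  unfolding cong_Zinv_def by (metis Zinv_uminus minus_diff_eq mult_minus_right)

lemma cong_Zinv_add:
  assumes "k \<noteq> 0" "cong_Zinv k d a b" "cong_Zinv k d a' b'"
  shows "cong_Zinv k d (a + a') (b + b')"
proof -
  obtain z z' where "z \<in> Zinv k" "a - b = d * z" "z' \<in> Zinv k" "a' - b' = d * z'"
    using assms(2,3) unfolding cong_Zinv_def by blast
  then show ?thesis
    unfolding cong_Zinv_def
    by (intro bexI[of _ "z + z'"] Zinv_add[OF assms(1)]) (simp_all add: algebra_simps)
qed

lemma cong_Zinv_trans: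
  assumes "k \<noteq> 0" "cong_Zinv k d a b" "cong_Zinv k d b c"
  shows "cong_Zinv k d a c"
  using cong_Zinv_add[OF assms] by (simp add: cong_Zinv_def)

lemma cong_Zinv_mult_left:
  assumes "c \<in> Zinv k" "cong_Zinv k d a b"
  shows "cong_Zinv k d (c * a) (c * b)"
proof -
  obtain z where "z \<in> Zinv k" "a - b = d * z"
    using assms(2) unfolding cong_Zinv_def by blast
  then show ?thesis
    unfolding cong_Zinv_def
    by (intro bexI[of _ "c * z"] Zinv_mult[OF assms(1)]) (simp_all add: algebra_simps)
qed

lemma cong_Zinv_power_one:
  assumes "k \<noteq> 0" "v \<in> Zinv k" "cong_Zinv k d v 1"
  shows "cong_Zinv k d (v ^ n) 1"
proof (induction n)
  case 0
  then show ?case by (simp add: cong_Zinv_refl)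
next
  case (Suc n)
  have "cong_Zinv k d (v * v ^ n) (v * 1)"
    by (rule cong_Zinv_mult_left[OF assms(2) Suc])
  then show ?case
    using cong_Zinv_trans[OF assms(1) _ assms(3)] by simp
qed

lemma cong_Zinv_power_int_mod:
  assumes "k \<noteq> 0" "M > 0"
  shows "cong_Zinv k (1 - of_int k ^ M) (of_int k powi h) (of_int k ^ nat (h mod int M))"
proof -
  define u :: rat where "u = of_int k ^ M"
  have u0: "u \<noteq> 0"
    using assms(1) by (simp add: u_def)
  have "cong_Zinv k (1 - u) u 1"
    unfolding cong_Zinv_def u_def by (intro bexI[of _ "-1"]) (simp_all add: of_int_in_Zinv[of "-1", simplified])
  moreover have "cong_Zinv k (1 - u) (inverse u) 1"
    unfolding cong_Zinv_def
  proof (intro bexI[of _ "inverse u"])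
    show "inverse u - 1 = (1 - u) * inverse u"
      using u0 by (simp add: field_simps)
    show "inverse u \<in> Zinv k"
      using power_int_in_Zinv[of k "- int M"] by (simp add: u_def power_int_minus)
  qed
  moreover have "u \<in> Zinv k" "inverse u \<in> Zinv k"
    using power_int_in_Zinv[of k "int M"] power_int_in_Zinv[of k "- int M"]
    by (simp_all add: u_def power_int_minus)
  ultimately have "cong_Zinv k (1 - u) (u powi (h div int M)) 1"
    unfolding power_int_def using cong_Zinv_power_one[OF assms(1)] by simp
  then have "cong_Zinv k (1 - u) (of_int k ^ nat (h mod int M) * u powi (h div int M))
      (of_int k ^ nat (h mod int M) * 1)"
    by (intro cong_Zinv_mult_left) (metis of_int_in_Zinv of_int_power)
  moreover have "of_int k powi h = of_int k ^ nat (h mod int M) * u powi (h div int M)"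
  proof -
    have "(of_int k :: rat) powi h = of_int k powi (int M * (h div int M)) * of_int k powi (h mod int M)"
      using assms(1) by (simp flip: power_int_add)
    also have "\<dots> = u powi (h div int M) * of_int k ^ nat (h mod int M)"
      using assms(2) by (simp add: u_def power_int_mult power_int_nonneg_exp)
    finally show ?thesis
      by (simp add: mult.commute)
  qed
  ultimately show ?thesis
    by (simp add: u_def)
qed

lemma snd_conj_class:
  assumes "k \<noteq> 0" "g' \<in> conj_class k g"
  shows "snd g' = snd g"
  using assms by (cases g) (auto simp: conj_class_def bs_conj)

lemma conj_class_shift:
  assumes k: "k \<noteq> 0" and mem: "(y, m) \<in> conj_class k g"
    and cong: "cong_Zinv k (1 - of_int k powi m) y' y"
  shows "(y', m) \<in> conj_class k g"
proof -
  obtain x m' where g: "g = (x, m')"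
    by (cases g)
  obtain a j where h: "(a, j) \<in> BS k"
    and y: "(y, m) = bs_mul k (bs_mul k (a, j) g) (bs_inv k (a, j))"
    using mem unfolding conj_class_def by auto
  obtain z where z: "z \<in> Zinv k" "y' - y = (1 - of_int k powi m) * z"
    using cong unfolding cong_Zinv_def by blast
  have "bs_mul k (z, 0) (a, j) \<in> BS k"
    using BS_mul[OF k Zinv_in_BS[OF k z(1)] h] .
  then have "(z + a, j) \<in> BS k"
    by (simp add: bs_mul_def)
  moreover have "(y', m) = bs_mul k (bs_mul k (z + a, j) g) (bs_inv k (z + a, j))"
    using y z(2) unfolding g bs_conj[OF k] by (simp add: algebra_simps)
  ultimately show ?thesis
    unfolding conj_class_def by blast
qed

lemma wordlen_le_length: "wordlen k (evalw k v) \<le> length v"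
  unfolding wordlen_def by (rule Least_le) blast

lemma conj_geodesic_length_le:
  assumes k: "k \<noteq> 0" and w: "conj_geodesic k w g"
    and v: "evalw k v = (y, snd (evalw k w))"
    and cong: "cong_Zinv k (1 - of_int k powi snd (evalw k w)) y (fst (evalw k w))"
  shows "length w \<le> length v"
proof -
  have "evalw k w \<in> conj_class k g"
    using w unfolding conj_geodesic_def by blast
  then have "evalw k v \<in> conj_class k g"
    using conj_class_shift[OF k _ cong] v by (metis prod.collapse)
  then have "length w \<le> wordlen k (evalw k v)"
    using w unfolding conj_geodesic_def by blast
  also have "\<dots> \<le> length v"
    by (rule wordlen_le_length)
  finally show ?thesis .
qed

definition t_concat :: "letter list list \<Rightarrow> letter list" where
  "t_concat segs = concat (map (\<lambda>s. s @ [T]) segs)"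

fun polyval :: "int \<Rightarrow> int list \<Rightarrow> rat" where
  "polyval k [] = 0"
| "polyval k (y # ys) = of_int y + of_int k * polyval k ys"

lemma polyval_snoc: "polyval k (ys @ [y]) = polyval k ys + of_int y * of_int k ^ length ys"
  by (induction ys) (auto simp: algebra_simps)

lemma polyval_map_upt: "polyval k (map c [0..<n]) = (\<Sum>r<n. of_int (c r) * of_int k ^ r)"
  by (induction n) (auto simp: polyval_snoc)

lemma evalw_t_concat:
  assumes "k \<noteq> 0" "\<forall>s \<in> set segs. set s \<subseteq> {A, Ainv}"
  shows "evalw k (t_concat segs) = (polyval k (map a_exp segs), int (length segs))"
  using assms(2)
  by (induction segs) (auto simp: t_concat_def evalw_append[OF assms(1)] evalw_a_word bs_mul_def)

lemma length_t_concat: "length (t_concat segs) = (\<Sum>s\<leftarrow>segs. length s + 1)"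
  by (induction segs) (auto simp: t_concat_def)

lemma sum_add_delta:
  fixes c :: "nat \<Rightarrow> int"
  assumes "r0 < M"
  shows "(\<Sum>r<M. of_int (c r + (if r = r0 then e else 0)) * (q :: rat) ^ r)
           = of_int e * q ^ r0 + (\<Sum>r<M. of_int (c r) * q ^ r)"
    and "(\<Sum>r<M. \<bar>c r + (if r = r0 then e else 0)\<bar>) \<le> \<bar>e\<bar> + (\<Sum>r<M. \<bar>c r\<bar>)"
proof -
  have "(\<Sum>r<M. of_int (c r + (if r = r0 then e else 0)) * q ^ r)
      = (\<Sum>r<M. (if r = r0 then of_int e * q ^ r else 0) + of_int (c r) * q ^ r)"
    by (intro sum.cong) (auto simp: distrib_right)
  also have "\<dots> = of_int e * q ^ r0 + (\<Sum>r<M. of_int (c r) * q ^ r)"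
    using assms by (simp add: sum.distrib)
  finally show "(\<Sum>r<M. of_int (c r + (if r = r0 then e else 0)) * q ^ r)
           = of_int e * q ^ r0 + (\<Sum>r<M. of_int (c r) * q ^ r)" .
  have "(\<Sum>r<M. \<bar>c r + (if r = r0 then e else 0)\<bar>) \<le> (\<Sum>r<M. \<bar>c r\<bar> + (if r = r0 then \<bar>e\<bar> else 0))"
    by (intro sum_mono) (simp add: abs_triangle_ineq)
  then show "(\<Sum>r<M. \<bar>c r + (if r = r0 then e else 0)\<bar>) \<le> \<bar>e\<bar> + (\<Sum>r<M. \<bar>c r\<bar>)"
    using assms by (simp add: sum.distrib)
qed

lemma fold_a_letter:
  fixes e :: int
  assumes k: "k \<noteq> 0" and M: "M > 0"
    and cong: "cong_Zinv k (1 - of_int k ^ M) (of_int k powi h * y) (\<Sum>r<M. of_int (c r) * of_int k ^ r)"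
  defines "c' \<equiv> \<lambda>r. c r + (if r = nat (h mod int M) then e else 0)"
  shows "cong_Zinv k (1 - of_int k ^ M) (of_int k powi h * (of_int e + y))
           (\<Sum>r<M. of_int (c' r) * of_int k ^ r)"
    and "(\<Sum>r<M. \<bar>c' r\<bar>) \<le> \<bar>e\<bar> + (\<Sum>r<M. \<bar>c r\<bar>)"
proof -
  have r0: "nat (h mod int M) < M"
    using M by (simp add: nat_less_iff)
  have "cong_Zinv k (1 - of_int k ^ M) (of_int e * of_int k powi h) (of_int e * of_int k ^ nat (h mod int M))"
    by (intro cong_Zinv_mult_left of_int_in_Zinv cong_Zinv_power_int_mod k M)
  from cong_Zinv_add[OF k this cong]
  show "cong_Zinv k (1 - of_int k ^ M) (of_int k powi h * (of_int e + y))
           (\<Sum>r<M. of_int (c' r) * of_int k ^ r)"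
    unfolding c'_def sum_add_delta(1)[OF r0] by (simp add: algebra_simps)
  show "(\<Sum>r<M. \<bar>c' r\<bar>) \<le> \<bar>e\<bar> + (\<Sum>r<M. \<bar>c r\<bar>)"
    unfolding c'_def by (rule sum_add_delta(2)[OF r0])
qed

(* c r is the total exponent of the a-letters of w at a height congruent to r modulo M,
   heights being counted from h *)
lemma fold_heights:
  assumes k: "k \<noteq> 0" and M: "M > 0"
  shows "\<exists>c. cong_Zinv k (1 - of_int k ^ M) (of_int k powi h * fst (evalw k w))
               (\<Sum>r<M. of_int (c r) * of_int k ^ r)
           \<and> (\<Sum>r<M. \<bar>c r\<bar>) \<le> int (count_list w A + count_list w Ainv)"
proof (induction w arbitrary: h)
  case Nil
  show ?case
    by (intro exI[of _ "\<lambda>_. 0"]) (simp add: cong_Zinv_refl)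
next
  case (Cons l w)
  obtain c where c: "cong_Zinv k (1 - of_int k ^ M) (of_int k powi h * fst (evalw k w))
      (\<Sum>r<M. of_int (c r) * of_int k ^ r)"
    and bound: "(\<Sum>r<M. \<bar>c r\<bar>) \<le> int (count_list w A + count_list w Ainv)"
    using Cons.IH by blast
  show ?case
  proof (cases l)
    case A
    then have "fst (evalw k (l # w)) = of_int 1 + fst (evalw k w)"
      by (simp add: bs_mul_def)
    then show ?thesis
      using fold_a_letter[OF k M c, of 1] bound A
      by (intro exI[of _ "\<lambda>r. c r + (if r = nat (h mod int M) then 1 else 0)"]) auto
  next
    case Ainv
    then have "fst (evalw k (l # w)) = of_int (- 1) + fst (evalw k w)"
      by (simp add: bs_mul_def)
    then show ?thesis
      using fold_a_letter[OF k M c, of "- 1"] bound Ainv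
      by (intro exI[of _ "\<lambda>r. c r + (if r = nat (h mod int M) then - 1 else 0)"]) auto
  next
    case T
    have "of_int k powi h * fst (evalw k (l # w)) = of_int k powi (h + 1) * fst (evalw k w)"
      using k T by (simp add: bs_mul_def power_int_add)
    then show ?thesis
      using Cons.IH[of "h + 1"] T by simp
  next
    case Tinv
    have "of_int k powi h * fst (evalw k (l # w)) = of_int k powi (h - 1) * fst (evalw k w)"
      using k Tinv by (simp add: bs_mul_def power_int_diff power_int_minus field_simps)
    then show ?thesis
      using Cons.IH[of "h - 1"] Tinv by simp
  qed
qed

lemma conj_geodesic_Tinv_notin:
  assumes k: "k \<noteq> 0" and w: "conj_geodesic k w g"
    and M: "snd (evalw k w) = int M" "M > 0"
  shows "Tinv \<notin> set w"
proof -
  obtain c where cong: "cong_Zinv k (1 - of_int k ^ M) (fst (evalw k w)) (\<Sum>r<M. of_int (c r) * of_int k ^ r)"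
    and bound: "(\<Sum>r<M. \<bar>c r\<bar>) \<le> int (count_list w A + count_list w Ainv)"
    using fold_heights[OF k M(2), of 0 w] by auto
  define v where "v = t_concat (map (\<lambda>r. apow (c r)) [0..<M])"
  have "evalw k v = (\<Sum>r<M. of_int (c r) * of_int k ^ r, snd (evalw k w))"
    unfolding v_def using evalw_t_concat[OF k] set_apow M(1)
    by (simp add: comp_def a_exp_apow polyval_map_upt)
  then have "length w \<le> length v"
    using conj_geodesic_length_le[OF k w] cong_Zinv_sym[OF cong] M(1) by simp
  moreover have "length v = M + (\<Sum>r<M. nat \<bar>c r\<bar>)"
    unfolding v_def length_t_concat
    by (simp add: comp_def length_apow interv_sum_list_conv_sum_set_nat atLeast0LessThan sum_Suc)
  moreover have "int (\<Sum>r<M. nat \<bar>c r\<bar>) = (\<Sum>r<M. \<bar>c r\<bar>)"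
    by simp
  ultimately have "length w \<le> M + count_list w A + count_list w Ainv"
    using bound by linarith
  then have "count_list w Tinv = 0"
    using length_eq_count_letters[of w] snd_evalw[of k w] M(1) by linarith
  then show ?thesis
    by (simp add: count_list_0_iff)
qed

lemma split_list_at_separators:
  "\<exists>segs r. xs = concat (map (\<lambda>s. s @ [t]) segs) @ r
     \<and> (\<forall>s \<in> set segs. t \<notin> set s) \<and> t \<notin> set r \<and> length segs = count_list xs t"
proof (induction xs)
  case Nil
  show ?case by simp
next
  case (Cons x xs)
  then obtain segs r where xs: "xs = concat (map (\<lambda>s. s @ [t]) segs) @ r"
    and segs: "\<forall>s \<in> set segs. t \<notin> set s" "t \<notin> set r" "length segs = count_list xs t"
    by blast
  show ?case
  proof (cases "x = t")
    case True
    with xs segs show ?thesis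
      by (intro exI[of _ "[] # segs"] exI[of _ r]) simp
  next
    case False
    show ?thesis
    proof (cases segs)
      case Nil
      with xs segs False show ?thesis
        by (intro exI[of _ "[]"] exI[of _ "x # r"]) simp
    next
      case (Cons s rest)
      with xs segs False show ?thesis
        by (intro exI[of _ "(x # s) # rest"] exI[of _ r]) simp
    qed
  qed
qed

lemma sum_list_mono_eq:
  fixes f g :: "'a \<Rightarrow> nat"
  assumes "\<forall>x \<in> set xs. f x \<le> g x" and "(\<Sum>x\<leftarrow>xs. g x) \<le> (\<Sum>x\<leftarrow>xs. f x)"
  shows "\<forall>x \<in> set xs. f x = g x"
  using assms
proof (induction xs)
  case (Cons a xs)
  have le: "\<forall>x \<in> set xs. f x \<le> g x"
    using Cons.prems(1) by simp
  then have "(\<Sum>x\<leftarrow>xs. f x) \<le> (\<Sum>x\<leftarrow>xs. g x)"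
    by (intro sum_list_mono) simp
  moreover have "f a \<le> g a"
    using Cons.prems(1) by simp
  moreover have "g a + (\<Sum>x\<leftarrow>xs. g x) \<le> f a + (\<Sum>x\<leftarrow>xs. f x)"
    using Cons.prems(2) by simp
  ultimately have "f a = g a" and "(\<Sum>x\<leftarrow>xs. g x) \<le> (\<Sum>x\<leftarrow>xs. f x)"
    by linarith+
  then show ?case
    using Cons.IH[OF le] by simp
qed simp

lemma conj_geodesic_rotate_eq_t_concat:
  assumes k: "k \<noteq> 0" and w: "conj_geodesic k w g" and no_Tinv: "Tinv \<notin> set w"
    and M: "count_list w T = M" "M > 0"
  shows "\<exists>n xs. length xs = M \<and> rotate n w = t_concat (map apow xs)"
proof -
  obtain segs r where dec: "w = t_concat segs @ r"
    and T_notin: "\<forall>s \<in> set segs. T \<notin> set s" "T \<notin> set r" and len: "length segs = M"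
    using split_list_at_separators[of w T] M(1) unfolding t_concat_def by blast
  then obtain s0 rest where segs: "segs = s0 # rest"
    using M(2) by (cases segs) auto
  have a_letters: "set s \<subseteq> {A, Ainv}" if "set s \<subseteq> set w" "T \<notin> set s" for s
    using that no_Tinv letter.exhaust by blast
  have "\<forall>s \<in> set segs. set s \<subseteq> set w" and "set r \<subseteq> set w"
    unfolding dec t_concat_def by auto
  then have segs_a: "\<forall>s \<in> set segs. set s \<subseteq> {A, Ainv}" and r_a: "set r \<subseteq> {A, Ainv}"
    using a_letters T_notin by blast+
  define segs' where "segs' = (r @ s0) # rest"
  have segs'_a: "\<forall>s \<in> set segs'. set s \<subseteq> {A, Ainv}"
    using segs_a r_a by (simp add: segs'_def segs)
  have rot: "rotate (length (t_concat segs)) w = t_concat segs'"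
    unfolding dec rotate_append by (simp add: segs'_def segs t_concat_def)
  define v where "v = t_concat (map (apow \<circ> a_exp) segs')"
  have ev_w: "evalw k w = (polyval k (map a_exp segs) + of_int k ^ M * of_int (a_exp r), int M)"
    using segs_a r_a len
    by (simp add: dec evalw_append[OF k] evalw_t_concat[OF k] evalw_a_word bs_mul_def)
  have ev_v: "evalw k v = (polyval k (map a_exp segs'), snd (evalw k w))"
    unfolding v_def using evalw_t_concat[OF k] set_apow len ev_w
    by (simp add: segs'_def segs a_exp_apow comp_def)
  (* moving the final a-block r to the front changes the value by (1 - k^M) * a_exp r *)
  have "cong_Zinv k (1 - of_int k ^ M) (polyval k (map a_exp segs')) (fst (evalw k w))"
    unfolding cong_Zinv_def ev_w
    by (intro bexI[of _ "of_int (a_exp r)"] of_int_in_Zinv)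
      (simp add: segs'_def segs a_exp_append algebra_simps)
  then have "length w \<le> length v"
    using conj_geodesic_length_le[OF k w ev_v] ev_w by simp
  also have "length v = (\<Sum>s\<leftarrow>segs'. nat \<bar>a_exp s\<bar> + 1)"
    unfolding v_def length_t_concat by (simp add: comp_def length_apow)
  finally have "(\<Sum>s\<leftarrow>segs'. length s + 1) \<le> (\<Sum>s\<leftarrow>segs'. nat \<bar>a_exp s\<bar> + 1)"
    using rot length_t_concat[of segs'] length_rotate by metis
  then have "\<forall>s \<in> set segs'. nat \<bar>a_exp s\<bar> + 1 = length s + 1"
    using segs'_a abs_a_exp_le_length by (intro sum_list_mono_eq) auto
  then have "map (apow \<circ> a_exp) segs' = segs'"
    using segs'_a a_word_eq_apow by (intro map_idI) auto
  then have "rotate (length (t_concat segs)) w = t_concat (map apow (map a_exp segs'))"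
    using rot by simp
  moreover have "length (map a_exp segs') = M"
    using len by (simp add: segs'_def segs)
  ultimately show ?thesis
    by blast
qed

theorem proposition4p2:
  fixes k :: int and x :: rat and m :: int and w :: "letter list"
  assumes "k \<ge> 2"
    and "(x, m) \<in> BS k"
    and "m > 0"
    and "conj_geodesic k w (x, m)"
  shows "\<exists>n xs. length xs = nat m \<and>
           rotate n w = concat (map (\<lambda>y. apow y @ [T]) xs)"
proof -
  have k: "k \<noteq> 0"
    using assms(1) by simp
  have "evalw k w \<in> conj_class k (x, m)"
    using assms(4) unfolding conj_geodesic_def by blast
  then have m: "snd (evalw k w) = int (nat m)"
    using snd_conj_class[OF k] assms(3) by simp
  then have no_Tinv: "Tinv \<notin> set w"
    using conj_geodesic_Tinv_notin[OF k assms(4) m] assms(3) by simp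
  moreover have "count_list w T = nat m"
    using m snd_evalw[of k w] no_Tinv assms(3) by simp
  ultimately have "\<exists>n xs. length xs = nat m \<and> rotate n w = t_concat (map apow xs)"
    using conj_geodesic_rotate_eq_t_concat[OF k assms(4)] assms(3) by simp
  then show ?thesis
    by (simp add: t_concat_def comp_def)
qed

end
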